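(* The open set $\mathcal T_+\setminus\mathcal L$ is connected and simply connected.
   Context: Let $d\ge2$ and let $\Pi_0^{(c)}=\mathbb C^{d}$ with coordinates $z^0,\dots,z^{d-1}$ and bilinear form $(z,z')=z^0z'^0-\sum_{j=1}^{d-1}z^jz'^j$ (complex Minkowski space). The future tube is $\mathcal T_+=\{X+iY\in\Pi_0^{(c)}: X,Y\in\mathbb R^d,\ (Y,Y)>0,\ Y^0>0\}$, and $\mathcal L=\{z\in\Pi_0^{(c)}:(z,z)+1\in(-\infty,0]\}$. *)

theory Defs
  imports "HOL-Analysis.Analysis"
begin

text \<open>Complex Minkowski space of dimension d = 1 + CARD('m) (so d \<ge> 2 automatically):
  a point is a pair (z^0, (z^1,...,z^{d-1})).\<close>

type_synonym 'm cmink = "complex \<times> (complex ^ 'm)"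
type_synonym 'm rmink = "real \<times> (real ^ 'm)"

definition mink_form :: "'m::finite cmink \<Rightarrow> 'm cmink \<Rightarrow> complex" where
  "mink_form z w = fst z * fst w - (\<Sum>j\<in>UNIV. snd z $ j * snd w $ j)"

definition rmink_form :: "'m::finite rmink \<Rightarrow> 'm rmink \<Rightarrow> real" where
  "rmink_form y v = fst y * fst v - (\<Sum>j\<in>UNIV. snd y $ j * snd v $ j)"

definition re_part :: "'m::finite cmink \<Rightarrow> 'm rmink" where
  "re_part z = (Re (fst z), \<chi> j. Re (snd z $ j))"

definition im_part :: "'m::finite cmink \<Rightarrow> 'm rmink" where
  "im_part z = (Im (fst z), \<chi> j. Im (snd z $ j))"

definition future_tube :: "'m::finite cmink set" where
  "future_tube = {z. rmink_form (im_part z) (im_part z) > 0 \<and> fst (im_part z) > 0}"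

definition cut_set :: "'m::finite cmink set" where
  "cut_set = {z. \<exists>t::real. t \<le> 0 \<and> mink_form z z + 1 = complex_of_real t}"

end

theory Submission imports Defs begin

(* The future tube is a convex cone.  The cut L consists of the points where (z,z) is real and
   at most -1; since (z,z) is homogeneous of degree 2 and |(z,z)| \<le> |z|^2, L avoids the open unit ball
   and its complement is stable under shrinking z \<mapsto> c z, 0 < c \<le> 1.  Radial shrinking therefore
   deforms the tube minus L into the tube intersected with a small ball, a convex set, so the tube
   minus L is contractible. *)

lemma contractible_if_shrinkable_to_convex_ball:
  fixes S :: "'a::real_normed_vector set"
  assumes shrink: "\<And>z c. z \<in> S \<Longrightarrow> 0 < c \<Longrightarrow> c \<le> 1 \<Longrightarrow> c *\<^sub>R z \<in> S"
    and "0 < r" and convex_core: "convex (S \<inter> cball 0 r)"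
  shows "contractible S"
proof -
  define mu where "mu z = r / max r (norm z)" for z :: 'a
  define g where "g z = mu z *\<^sub>R z" for z
  have mu: "0 < mu z" "mu z \<le> 1" for z
    using \<open>0 < r\<close> by (auto simp: mu_def)
  have cont_g: "continuous_on S g"
    unfolding g_def mu_def using \<open>0 < r\<close> by (intro continuous_intros) auto
  have g_core: "g z \<in> S \<inter> cball 0 r" if "z \<in> S" for z
  proof -
    have "mu z * norm z \<le> r"
      using \<open>0 < r\<close> by (auto simp: mu_def field_simps max_def)
    then show ?thesis using that mu shrink by (simp add: g_def abs_of_pos)
  qed
  have "homotopic_with_canon (\<lambda>h. True) S S id g"
  proof (rule homotopic_with_linear)
    fix z assume "z \<in> S"
    show "closed_segment (id z) (g z) \<subseteq> S"
    proof
      fix w assume "w \<in> closed_segment (id z) (g z)"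
      then obtain u where u: "0 \<le> u" "u \<le> 1" and w: "w = (1 - u + u * mu z) *\<^sub>R z"
        by (auto simp: closed_segment_def g_def algebra_simps)
      have "u * mu z \<le> u" "u * (1 - mu z) \<le> 1 - mu z"
        using u mu[of z] by (auto intro: mult_left_le mult_left_le_one_le)
      then show "w \<in> S"
        unfolding w using \<open>z \<in> S\<close> mu[of z] by (intro shrink) (auto simp: algebra_simps)
    qed
  qed (use cont_g in auto)
  moreover obtain a where "homotopic_with_canon (\<lambda>h. True) S (S \<inter> cball 0 r) g (\<lambda>x. a)"
    using nullhomotopic_into_contractible[OF cont_g _ convex_imp_contractible[OF convex_core]]
      g_core by blast
  then have "homotopic_with_canon (\<lambda>h. True) S S g (\<lambda>x. a)"
    by (rule homotopic_with_subset_right) simp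
  ultimately show ?thesis
    unfolding contractible_def by (blast intro: homotopic_with_trans)
qed

lemma convex_light_cone: "convex {y :: real \<times> 'a::real_normed_vector. norm (snd y) < fst y}"
proof (rule convexI)
  fix y v :: "real \<times> 'a" and a b :: real
  assume y: "y \<in> {y. norm (snd y) < fst y}" and v: "v \<in> {y. norm (snd y) < fst y}"
    and "0 \<le> a" "0 \<le> b" "a + b = 1"
  have "norm (a *\<^sub>R snd y + b *\<^sub>R snd v) \<le> a * norm (snd y) + b * norm (snd v)"
    using \<open>0 \<le> a\<close> \<open>0 \<le> b\<close> norm_triangle_ineq[of "a *\<^sub>R snd y" "b *\<^sub>R snd v"] by simp
  also have "\<dots> < a * fst y + b * fst v"
  proof (cases "a = 0")
    case True
    then show ?thesis using v \<open>a + b = 1\<close> by simp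
  next
    case False
    then have "a * norm (snd y) < a * fst y" "b * norm (snd v) \<le> b * fst v"
      using y v \<open>0 \<le> a\<close> \<open>0 \<le> b\<close> by (auto intro: mult_left_mono)
    then show ?thesis by linarith
  qed
  finally show "a *\<^sub>R y + b *\<^sub>R v \<in> {y. norm (snd y) < fst y}"
    by simp
qed

lemma rmink_form_self: "rmink_form y y = (fst y)\<^sup>2 - (norm (snd y))\<^sup>2"
  by (simp add: rmink_form_def norm_vec_def L2_set_def sum_nonneg power2_eq_square)

lemma future_tube_eq_vimage_light_cone:
  "future_tube = im_part -` {y. norm (snd y) < fst y}"
proof -
  have "a\<^sup>2 - b\<^sup>2 > 0 \<and> a > 0 \<longleftrightarrow> b < a" if "0 \<le> b" for a b :: real
  proof
    assume "a\<^sup>2 - b\<^sup>2 > 0 \<and> a > 0"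
    then show "b < a" using power_less_imp_less_base[of b 2 a] by simp
  next
    assume "b < a"
    then show "a\<^sup>2 - b\<^sup>2 > 0 \<and> a > 0" using that power_strict_mono[of b a 2] by simp
  qed
  then show ?thesis
    by (auto simp: future_tube_def rmink_form_self)
qed

lemma linear_im_part: "linear im_part"
  by (rule linearI) (simp_all add: im_part_def vec_eq_iff)

lemma open_future_tube: "open (future_tube :: 'm::finite cmink set)"
proof -
  have "open {y :: 'm::finite rmink. norm (snd y) < fst y}"
    by (intro open_Collect_less continuous_intros)
  moreover have "continuous_on UNIV im_part"
    by (rule linear_continuous_on) (simp add: linear_im_part flip: linear_conv_bounded_linear)
  ultimately show ?thesis
    unfolding future_tube_eq_vimage_light_cone by (rule open_vimage)
qed

lemma convex_future_tube: "convex future_tube"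
  unfolding future_tube_eq_vimage_light_cone
  by (intro convex_linear_vimage linear_im_part convex_light_cone)

lemma scaleR_in_future_tube: "z \<in> future_tube \<Longrightarrow> 0 < c \<Longrightarrow> c *\<^sub>R z \<in> future_tube"
  by (simp add: future_tube_eq_vimage_light_cone linear.scaleR[OF linear_im_part])

lemma cut_set_eq: "cut_set = {z. Im (mink_form z z) = 0 \<and> Re (mink_form z z) \<le> -1}"
proof (intro set_eqI iffI)
  fix z assume "z \<in> cut_set"
  then obtain t :: real where "t \<le> 0" "mink_form z z = of_real (t - 1)"
    by (auto simp: cut_set_def eq_diff_eq)
  then show "z \<in> {z. Im (mink_form z z) = 0 \<and> Re (mink_form z z) \<le> -1}"
    by simp
next
  fix z assume "z \<in> {z. Im (mink_form z z) = 0 \<and> Re (mink_form z z) \<le> -1}"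
  then have "mink_form z z + 1 = of_real (Re (mink_form z z) + 1) \<and> Re (mink_form z z) + 1 \<le> 0"
    by (simp add: complex_eq_iff)
  then show "z \<in> cut_set"
    unfolding cut_set_def by blast
qed

lemma closed_cut_set: "closed cut_set"
proof -
  have "continuous_on UNIV (\<lambda>z::'m::finite cmink. mink_form z z)"
    unfolding mink_form_def by (intro continuous_intros)
  then show ?thesis
    unfolding cut_set_eq Collect_conj_eq
    by (intro closed_Int closed_Collect_eq closed_Collect_le continuous_intros) auto
qed

lemma mink_form_scaleR: "mink_form (a *\<^sub>R z) (b *\<^sub>R w) = of_real (a * b) * mink_form z w"
proof -
  have "r *\<^sub>R x = of_real r * x" for r and x :: complex
    by (rule scaleR_conv_of_real)
  then show ?thesis
    by (simp add: mink_form_def sum_distrib_left algebra_simps)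
qed

lemma norm_mink_form_self_le: "norm (mink_form z z) \<le> (norm z)\<^sup>2"
proof -
  have "norm (\<Sum>j\<in>UNIV. snd z $ j * snd z $ j) \<le> (\<Sum>j\<in>UNIV. (norm (snd z $ j))\<^sup>2)"
    by (rule order_trans[OF norm_sum]) (simp add: norm_mult power2_eq_square)
  also have "\<dots> = (norm (snd z))\<^sup>2"
    by (simp add: norm_vec_def L2_set_def sum_nonneg)
  finally have snd_bound: "norm (\<Sum>j\<in>UNIV. snd z $ j * snd z $ j) \<le> (norm (snd z))\<^sup>2" .
  have "norm (mink_form z z) \<le> norm (fst z * fst z) + norm (\<Sum>j\<in>UNIV. snd z $ j * snd z $ j)"
    unfolding mink_form_def by (rule norm_triangle_ineq4)
  also have "\<dots> \<le> (norm (fst z))\<^sup>2 + (norm (snd z))\<^sup>2"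
    using snd_bound by (simp add: norm_mult power2_eq_square)
  also have "\<dots> = (norm z)\<^sup>2"
    by (simp add: norm_prod_def)
  finally show ?thesis .
qed

lemma notin_cut_set_if_norm_less_1: "norm z < 1 \<Longrightarrow> z \<notin> cut_set"
  using norm_mink_form_self_le[of z] complex_Re_le_cmod[of "- mink_form z z"]
    abs_square_less_1[of "norm z"]
  by (auto simp: cut_set_eq)

lemma scaleR_notin_cut_set:
  assumes "z \<notin> cut_set" "0 < c" "c \<le> 1"
  shows "c *\<^sub>R z \<notin> cut_set"
proof
  assume "c *\<^sub>R z \<in> cut_set"
  then have Im: "Im (mink_form z z) = 0" and scaled: "c\<^sup>2 * Re (mink_form z z) \<le> -1"
    using \<open>0 < c\<close> by (auto simp: cut_set_eq mink_form_scaleR power2_eq_square)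
  have "Re (mink_form z z) < 0"
    using scaled zero_le_mult_iff[of "c\<^sup>2" "Re (mink_form z z)"] by force
  moreover have "c\<^sup>2 \<le> 1"
    using assms by (simp add: power_le_one)
  ultimately have "(1 - c\<^sup>2) * Re (mink_form z z) \<le> 0"
    by (simp add: mult_nonneg_nonpos)
  then have "Re (mink_form z z) \<le> -1"
    using scaled by (simp add: algebra_simps)
  with Im assms(1) show False
    by (simp add: cut_set_eq)
qed

lemma contractible_future_tube_minus_cut_set:
  "contractible (future_tube - cut_set :: 'm::finite cmink set)"
proof (rule contractible_if_shrinkable_to_convex_ball)
  have "(future_tube - cut_set) \<inter> cball 0 (1/2) = future_tube \<inter> cball (0::'m cmink) (1/2)"
    using notin_cut_set_if_norm_less_1 by force
  then show "convex ((future_tube - cut_set) \<inter> cball (0::'m cmink) (1/2))"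
    by (simp add: convex_Int convex_future_tube)
qed (auto simp: scaleR_in_future_tube scaleR_notin_cut_set)

theorem lemma26:
  shows "open (future_tube - cut_set :: 'm::finite cmink set)
       \<and> connected (future_tube - cut_set :: 'm::finite cmink set)
       \<and> simply_connected (future_tube - cut_set :: 'm::finite cmink set)"
  using contractible_future_tube_minus_cut_set open_future_tube closed_cut_set
  by (auto intro: open_Diff contractible_imp_connected contractible_imp_simply_connected)

end
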